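(* Let $T_1,T_2>0$, $T\coloneqq T_1T_2$, and $\mathrm{SiLU}_T(x)\coloneqq x/(1+e^{-x/T})$. Let $H$ be Hermitian and $\rho$ a density operator on a finite-dimensional Hilbert space $\mathcal{H}$. Prepare two control qumodes in $|0\rangle\langle0|\otimes|\ell_{T_1}\rangle\langle\ell_{T_1}|$, where $|0\rangle=\int dp\,\sqrt{e^{-p^2}/\sqrt{\pi}}\,|p\rangle$ is the vacuum and $|\ell_{T_1}\rangle=\int dp\sqrt{\ell_{T_1}(p)}|p\rangle$, apply $W\coloneqq e^{i\hat{x}_2\otimes H/T_2}e^{i\hat{x}_1\otimes H}$, and let $P(p_1,p_2)$ be the joint density of momentum-measurement outcomes on the two control modes (defined as $\operatorname{Tr}[(|p_1\rangle\langle p_1|\otimes|p_2\rangle\langle p_2|\otimes I)W(|0\rangle\langle0|\otimes|\ell_{T_1}\rangle\langle\ell_{T_1}|\otimes\rho)W^\dagger]$). Then $$\int\!\!\int p_1\,\mathbf{1}_{p_2\ge0}\,P(p_1,p_2)\,dp_1\,dp_2=\operatorname{Tr}[\mathrm{SiLU}_T(H)\rho].$$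
   Context: $\ell_{T_1}(p)\coloneqq\frac{e^{p/T_1}}{T_1(e^{p/T_1}+1)^2}$ is the logistic density. Each control qumode has Hilbert space $L^2(\mathbb{R})$ with generalized position/momentum eigenbases, $\langle x|p\rangle=e^{ipx}/\sqrt{2\pi}$; $\hat x_m$ is the position quadrature of mode $m$ and $e^{i\hat{x}_m\otimes B}=\sum_i\int dx\,e^{ixb_i}|x\rangle\langle x|_m\otimes|i\rangle\langle i|$ for Hermitian $B=\sum_ib_i|i\rangle\langle i|$. *)

theory Defs
  imports "HOL-Analysis.Analysis"
begin

(* The finite-dimensional Hilbert space is modelled as complex^'n (coordinates in a
   fixed orthonormal basis); operators on it are matrices complex^'n^'n. *)

definition cadj :: "complex^'n^'m \<Rightarrow> complex^'m^'n" where
  "cadj A = (\<chi> i j. cnj (A $ j $ i))"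

definition hermitian_mat :: "complex^'n^'n \<Rightarrow> bool" where
  "hermitian_mat A \<longleftrightarrow> cadj A = A"

definition unitary_mat :: "complex^'n^'n \<Rightarrow> bool" where
  "unitary_mat U \<longleftrightarrow> cadj U ** U = mat 1 \<and> U ** cadj U = mat 1"

definition density_op :: "complex^'n^'n \<Rightarrow> bool" where
  "density_op \<rho> \<longleftrightarrow> hermitian_mat \<rho>
     \<and> (\<forall>v::complex^'n. (\<Sum>i\<in>UNIV. cnj (v $ i) * (\<rho> *v v) $ i) \<in> \<real>
                          \<and> 0 \<le> Re (\<Sum>i\<in>UNIV. cnj (v $ i) * (\<rho> *v v) $ i))
     \<and> trace \<rho> = 1"

definition diag_m :: "('n \<Rightarrow> complex) \<Rightarrow> complex^'n^'n" where
  "diag_m d = (\<chi> i j. if i = j then d i else 0)"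

(* For Hermitian B = U diag(b) U^dagger (eigenvalues b_i, eigenvectors = columns of U):
   the spectral projector onto the i-th eigenvector, and the functional calculus f(B). *)
definition eproj :: "complex^'n^'n \<Rightarrow> 'n \<Rightarrow> complex^'n^'n" where
  "eproj U i = U ** diag_m (\<lambda>j. if j = i then 1 else 0) ** cadj U"

definition spec_fun :: "(real \<Rightarrow> real) \<Rightarrow> complex^'n^'n \<Rightarrow> ('n \<Rightarrow> real) \<Rightarrow> complex^'n^'n" where
  "spec_fun f U b = U ** diag_m (\<lambda>i. complex_of_real (f (b i))) ** cadj U"

definition silu :: "real \<Rightarrow> real \<Rightarrow> real" where
  "silu T x = x / (1 + exp (- x / T))"

definition logistic :: "real \<Rightarrow> real \<Rightarrow> real" where
  "logistic T1 p = exp (p / T1) / (T1 * (exp (p / T1) + 1)\<^sup>2)"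

definition vac_wf :: "real \<Rightarrow> real" where
  "vac_wf p = sqrt (exp (- (p\<^sup>2)) / sqrt pi)"

definition logistic_wf :: "real \<Rightarrow> real \<Rightarrow> real" where
  "logistic_wf T1 p = sqrt (logistic T1 p)"

(* States/operators on L^2(R) (x) L^2(R) (x) C^n are written in the (generalized)
   momentum eigenbasis |p1>|p2> of the two control qumodes.  A (column of an) object is a
   function (p1,p2) => matrix; an operator on the full space is a kernel
   K (p1,p2) (q1,q2) = <p1,p2| K |q1,q2>, a complex^'n^'n matrix on the system.

   With <x|p> = e^{ipx}/sqrt(2 pi) one has e^{i x b}|p> = |p+b>, hence
   e^{i x_m (x) B} = sum_i int dx e^{i x b_i}|x><x|_m (x) |i><i| acts in the momentum
   representation as  F(p) |-> sum_i P_i F(p - b_i e_m),  P_i the eigenprojectors of B. *)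

definition ctrl_exp1 :: "complex^'n^'n \<Rightarrow> ('n \<Rightarrow> real)
     \<Rightarrow> (real \<times> real \<Rightarrow> complex^'k^'n) \<Rightarrow> (real \<times> real \<Rightarrow> complex^'k^'n)" where
  "ctrl_exp1 U b F = (\<lambda>(p1, p2). \<Sum>i\<in>UNIV. eproj U i ** F (p1 - b i, p2))"

definition ctrl_exp2 :: "complex^'n^'n \<Rightarrow> ('n \<Rightarrow> real)
     \<Rightarrow> (real \<times> real \<Rightarrow> complex^'k^'n) \<Rightarrow> (real \<times> real \<Rightarrow> complex^'k^'n)" where
  "ctrl_exp2 U b F = (\<lambda>(p1, p2). \<Sum>i\<in>UNIV. eproj U i ** F (p1, p2 - b i))"

definition W_op :: "real \<Rightarrow> complex^'n^'n \<Rightarrow> ('n \<Rightarrow> real)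
     \<Rightarrow> (real \<times> real \<Rightarrow> complex^'n^'n) \<Rightarrow> (real \<times> real \<Rightarrow> complex^'n^'n)" where
  "W_op T2 U b = ctrl_exp2 U (\<lambda>i. b i / T2) \<circ> ctrl_exp1 U b"

type_synonym ('n) kernel = "real \<times> real \<Rightarrow> real \<times> real \<Rightarrow> complex^'n^'n"

definition op_left :: "((real \<times> real \<Rightarrow> complex^'n^'n) \<Rightarrow> (real \<times> real \<Rightarrow> complex^'n^'n))
     \<Rightarrow> ('n::finite) kernel \<Rightarrow> ('n::finite) kernel" where
  "op_left A K = (\<lambda>p q. A (\<lambda>r. K r q) p)"

definition ker_adj :: "('n::finite) kernel \<Rightarrow> ('n::finite) kernel" where
  "ker_adj K = (\<lambda>p q. cadj (K q p))"

(* A K A^dagger = ( A (A K)^dagger )^dagger *)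
definition sandwich :: "((real \<times> real \<Rightarrow> complex^'n^'n) \<Rightarrow> (real \<times> real \<Rightarrow> complex^'n^'n))
     \<Rightarrow> ('n::finite) kernel \<Rightarrow> ('n::finite) kernel" where
  "sandwich A K = ker_adj (op_left A (ker_adj (op_left A K)))"

definition init_state :: "real \<Rightarrow> complex^'n^'n \<Rightarrow> ('n::finite) kernel" where
  "init_state T1 \<rho> = (\<lambda>(p1, p2) (q1, q2).
      (vac_wf p1 * logistic_wf T1 p2 * vac_wf q1 * logistic_wf T1 q2) *\<^sub>R \<rho>)"

definition joint_density :: "real \<Rightarrow> real \<Rightarrow> complex^'n^'n \<Rightarrow> ('n \<Rightarrow> real)
     \<Rightarrow> complex^'n^'n \<Rightarrow> real \<times> real \<Rightarrow> complex" where
  "joint_density T1 T2 U b \<rho> p = trace (sandwich (W_op T2 U b) (init_state T1 \<rho>) p p)"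

end

theory Submission
  imports Defs "HOL-Probability.Probability" "HOL-Real_Asymp.Real_Asymp"
begin

(* Because the spectral projectors P_i of H are orthogonal idempotents, W acts on the i-th
   eigenspace as the shift of both momenta by (b_i, b_i/T2), and the diagonal of the
   conjugated state keeps only the blocks P_i rho P_i.  Hence the outcome density is the
   mixture, with weights Tr(P_i rho), of the product densities
   g(p1 - b_i) l_T1(p2 - b_i/T2), where g is the vacuum Gaussian.  Integrating p1 against
   the Gaussian gives its mean b_i, and integrating the logistic density over p2 >= 0 gives
   1/(1 + exp(-b_i/(T1 T2))); their product is SiLU_T(b_i), and summing with the weights
   gives Tr[SiLU_T(H) rho]. *)

lemma matrix_mul_sum_right: "(A::'a::semiring_1^'n^'m) ** sum f S = (\<Sum>x\<in>S. A ** f x)"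
  by (induction S rule: infinite_finite_induct) (auto simp: matrix_add_ldistrib)

lemma matrix_add_rdistrib: "(B + C) ** (A::'a::semiring_1^'p^'n) = B ** A + C ** A"
  by (vector matrix_matrix_mult_def sum.distrib[symmetric] field_simps)

lemma matrix_mul_sum_left: "sum f S ** (A::'a::semiring_1^'p^'n) = (\<Sum>x\<in>S. f x ** A)"
  by (induction S rule: infinite_finite_induct) (auto simp: matrix_add_rdistrib)

lemma matrix_mul_scaleR_left: "((r::real) *\<^sub>R (A::'a::real_algebra_1^'n^'m)) ** B = r *\<^sub>R (A ** B)"
  by (simp add: matrix_matrix_mult_def vec_eq_iff scaleR_sum_right)

lemma matrix_mul_scaleR_right: "(A::'a::real_algebra_1^'n^'m) ** ((r::real) *\<^sub>R B) = r *\<^sub>R (A ** B)"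
  by (simp add: matrix_matrix_mult_def vec_eq_iff scaleR_sum_right)

lemma trace_sum: "trace (sum (f::_ \<Rightarrow> 'a::comm_semiring_1^'n^'n) S) = (\<Sum>x\<in>S. trace (f x))"
  by (induction S rule: infinite_finite_induct) (auto simp: trace_add trace_0[simplified])

lemma trace_scaleR: "trace ((r::real) *\<^sub>R (A::complex^'n^'n)) = of_real r * trace A"
  by (simp add: trace_def sum_distrib_left scaleR_conv_of_real[where 'a=complex])

lemma cadj_matrix_mul: "cadj ((A::complex^'n^'m) ** B) = cadj B ** cadj A"
  by (simp add: cadj_def matrix_matrix_mult_def vec_eq_iff mult.commute)

lemma cadj_cadj [simp]: "cadj (cadj A) = A"
  by (simp add: cadj_def vec_eq_iff)

lemma cadj_sum: "cadj (sum f S) = (\<Sum>x\<in>S. cadj (f x))"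
  by (simp add: cadj_def vec_eq_iff sum_component)

lemma cadj_diag_m: "cadj (diag_m d) = diag_m (\<lambda>i. cnj (d i))"
  by (simp add: cadj_def diag_m_def vec_eq_iff)

lemma diag_m_mult: "diag_m d ** diag_m e = diag_m (\<lambda>i. d i * e i)"
proof -
  have "(\<Sum>k\<in>UNIV. (if i = k then d i else 0) * (if k = j then e k else 0))
      = (if i = j then d i * e i else 0)" for i j :: 'a
  proof -
    have "(\<Sum>k\<in>UNIV. (if i = k then d i else 0) * (if k = j then e k else 0))
        = (\<Sum>k\<in>UNIV. if k = i then (if i = j then d i * e i else 0) else 0)"
      by (intro sum.cong) auto
    then show ?thesis by simp
  qed
  then show ?thesis
    unfolding diag_m_def matrix_matrix_mult_def vec_eq_iff by simp
qed

lemma diag_m_of_real_eq_sum: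
  "diag_m (\<lambda>i. complex_of_real (g i)) = (\<Sum>i\<in>UNIV. g i *\<^sub>R diag_m (\<lambda>j. if j = i then 1 else 0))"
proof -
  have "(\<Sum>i\<in>UNIV. g i *\<^sub>R (if j = i then 1 else 0 :: complex)) = of_real (g j)" for j
  proof -
    have "(\<Sum>i\<in>UNIV. g i *\<^sub>R (if j = i then 1 else 0 :: complex))
        = (\<Sum>i\<in>UNIV. if i = j then of_real (g j) else 0)"
      by (intro sum.cong) (auto simp: scaleR_conv_of_real)
    then show ?thesis by simp
  qed
  then show ?thesis
    by (auto simp: diag_m_def vec_eq_iff sum_component)
qed

lemma cadj_eproj: "cadj (eproj U i) = eproj U i"
  by (simp add: eproj_def cadj_matrix_mul cadj_diag_m matrix_mul_assoc if_distrib cong: if_cong)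

lemma eproj_mult:
  assumes "unitary_mat U"
  shows "eproj U i ** eproj U j = (if i = j then eproj U i else 0)"
proof -
  let ?e = "\<lambda>i. diag_m (\<lambda>k. if k = i then 1 else 0) :: complex^'a^'a"
  have unitary: "cadj U ** U = mat 1"
    using assms unfolding unitary_mat_def by simp
  have delta: "(\<lambda>k. (if k = i then 1 else 0) * (if k = j then 1 else 0))
      = (\<lambda>k. if k = i \<and> k = j then 1 else (0::complex))"
    by auto
  have "eproj U i ** eproj U j = U ** (?e i ** (cadj U ** U) ** ?e j) ** cadj U"
    by (simp add: eproj_def matrix_mul_assoc)
  moreover have "?e i ** (cadj U ** U) ** ?e j = diag_m (\<lambda>k. if k = i \<and> k = j then 1 else 0)"
    by (simp only: unitary matrix_mul_rid diag_m_mult delta)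
  moreover have "diag_m (\<lambda>k. if k = i \<and> k = j then 1 else 0) = (if i = j then ?e i else 0)"
    by (simp add: diag_m_def vec_eq_iff)
  ultimately show ?thesis
    by (simp add: eproj_def)
qed

lemma spec_fun_eq_sum_eproj: "spec_fun f U b = (\<Sum>i\<in>UNIV. f (b i) *\<^sub>R eproj U i)"
  by (simp add: spec_fun_def eproj_def diag_m_of_real_eq_sum matrix_mul_sum_left
      matrix_mul_sum_right matrix_mul_scaleR_left matrix_mul_scaleR_right)

text \<open>Both controlled shifts are diagonal in the same eigenbasis, so by orthogonality of the
  projectors only equal eigen-indices survive in the composite.\<close>

lemma W_op_apply:
  assumes "unitary_mat U"
  shows "W_op T2 U b F (p1, p2) = (\<Sum>i\<in>UNIV. eproj U i ** F (p1 - b i, p2 - b i / T2))"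
proof -
  have "W_op T2 U b F (p1, p2)
      = (\<Sum>j\<in>UNIV. \<Sum>i\<in>UNIV. eproj U j ** eproj U i ** F (p1 - b i, p2 - b j / T2))"
    by (simp add: W_op_def ctrl_exp1_def ctrl_exp2_def matrix_mul_sum_right matrix_mul_assoc)
  then show ?thesis
    by (simp add: eproj_mult[OF assms] if_distrib if_distribR sum.delta cong: if_cong)
qed

lemma trace_sandwich_W_op:
  fixes p1 p2 T2 :: real and b :: "'n::finite \<Rightarrow> real"
  assumes "unitary_mat U"
  defines "s \<equiv> \<lambda>i. (p1 - b i, p2 - b i / T2)"
  shows "trace (sandwich (W_op T2 U b) K (p1, p2) (p1, p2))
       = (\<Sum>i\<in>UNIV. trace (eproj U i ** K (s i) (s i)))"
proof -
  have "sandwich (W_op T2 U b) K (p1, p2) (p1, p2)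
      = (\<Sum>j\<in>UNIV. \<Sum>i\<in>UNIV. eproj U i ** K (s i) (s j) ** eproj U j)"
    by (simp add: sandwich_def ker_adj_def op_left_def W_op_apply[OF assms(1)] s_def
        cadj_sum cadj_matrix_mul cadj_eproj matrix_mul_sum_left)
  then have "trace (sandwich (W_op T2 U b) K (p1, p2) (p1, p2))
      = (\<Sum>j\<in>UNIV. \<Sum>i\<in>UNIV. trace (eproj U j ** eproj U i ** K (s i) (s j)))"
    by (simp add: trace_sum trace_mul_sym[of _ "eproj U _"] matrix_mul_assoc)
  then show ?thesis
    by (simp add: eproj_mult[OF assms(1)] if_distrib if_distribR sum.delta trace_0[simplified]
        cong: if_cong)
qed

lemma logistic_nonneg: "T1 > 0 \<Longrightarrow> 0 \<le> logistic T1 p"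
  by (simp add: logistic_def)

lemma joint_density_eq_mixture:
  assumes "T1 > 0" and "unitary_mat U"
  shows "joint_density T1 T2 U b \<rho> (p1, p2)
    = (\<Sum>i\<in>UNIV. of_real (exp (- ((p1 - b i)\<^sup>2)) / sqrt pi * logistic T1 (p2 - b i / T2))
                 * trace (eproj U i ** \<rho>))"
proof -
  have "vac_wf x * vac_wf x = exp (- (x\<^sup>2)) / sqrt pi" for x
    by (simp add: vac_wf_def)
  moreover have "logistic_wf T1 y * logistic_wf T1 y = logistic T1 y" for y
    using logistic_nonneg[OF assms(1)] by (simp add: logistic_wf_def)
  ultimately have "vac_wf x * logistic_wf T1 y * vac_wf x * logistic_wf T1 y
      = exp (- (x\<^sup>2)) / sqrt pi * logistic T1 y" for x y
    by (metis mult.assoc mult.left_commute)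
  then show ?thesis
    by (simp add: joint_density_def trace_sandwich_W_op[OF assms(2)] init_state_def
        matrix_mul_scaleR_right trace_scaleR)
qed

lemma (in pair_sigma_finite) has_bochner_integral_prod_mult:
  fixes f g :: "_ \<Rightarrow> real"
  assumes f: "has_bochner_integral M1 f I" and g: "has_bochner_integral M2 g J"
  shows "has_bochner_integral (M1 \<Otimes>\<^sub>M M2) (\<lambda>(x, y). f x * g y) (I * J)"
proof -
  have fi: "integrable M1 f" and gi: "integrable M2 g"
    using f g by (auto intro: integrable.intros)
  then have [measurable]: "f \<in> borel_measurable M1" "g \<in> borel_measurable M2"
    by auto
  have int: "integrable (M1 \<Otimes>\<^sub>M M2) (\<lambda>(x, y). f x * g y)"
  proof (rule Fubini_integrable)
    have "integrable M1 (\<lambda>x. norm (f x) * (\<integral>y. norm (g y) \<partial>M2))"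
      by (rule integrable_mult_left) (rule integrable_norm[OF fi])
    then show "integrable M1 (\<lambda>x. \<integral>y. norm (case (x, y) of (x, y) \<Rightarrow> f x * g y) \<partial>M2)"
      by (simp add: abs_mult)
    show "AE x in M1. integrable M2 (\<lambda>y. case (x, y) of (x, y) \<Rightarrow> f x * g y)"
      using gi by simp
  qed measurable
  have "(\<integral>z. (case z of (x, y) \<Rightarrow> f x * g y) \<partial>(M1 \<Otimes>\<^sub>M M2)) = (\<integral>x. (\<integral>y. f x * g y \<partial>M2) \<partial>M1)"
    using integral_fst'[OF int] by simp
  also have "\<dots> = I * J"
    using f g by (simp add: has_bochner_integral_iff)
  finally show ?thesis
    using int by (simp add: has_bochner_integral_iff)
qed

lemma has_bochner_integral_vacuum_mean:
  "has_bochner_integral lborel (\<lambda>x. x * (exp (- ((x - b)\<^sup>2)) / sqrt pi)) b"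
proof -
  have "exp (- ((x - b)\<^sup>2)) / sqrt pi = normal_density b (1 / sqrt 2) x" for x
    by (simp add: normal_density_def power_divide)
  then show ?thesis
    using normal_moment_nz_1[of "1 / sqrt 2" b] by (simp add: mult.commute)
qed

lemma logistic_cdf_deriv:
  assumes "T1 > 0"
  shows "((\<lambda>x. exp ((x - c) / T1) / (exp ((x - c) / T1) + 1)) has_real_derivative logistic T1 (x - c)) (at x)"
proof -
  have "0 < exp ((x - c) / T1) + 1"
    by (simp add: add_pos_pos)
  then show ?thesis
    using assms by (auto intro!: derivative_eq_intros simp: logistic_def field_simps power2_eq_square)
qed

lemma has_bochner_integral_logistic_tail:
  assumes "T1 > 0"
  shows "has_bochner_integral lborel (\<lambda>x. indicator {0..} x * logistic T1 (x - c)) (1 / (1 + exp (- c / T1)))"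
proof -
  have "((\<lambda>x. exp ((x - c) / T1) / (exp ((x - c) / T1) + 1)) \<longlongrightarrow> 1) at_top"
    using assms by real_asymp
  then have "(\<integral>\<^sup>+x. ennreal (logistic T1 (x - c)) * indicator {0..} x \<partial>lborel)
      = ennreal (1 - exp ((0 - c) / T1) / (exp ((0 - c) / T1) + 1))"
    using logistic_cdf_deriv[OF assms] logistic_nonneg[OF assms]
    by (intro nn_integral_FTC_atLeast) (auto simp: logistic_def)
  moreover have "1 - exp ((0 - c) / T1) / (exp ((0 - c) / T1) + 1) = 1 / (1 + exp (- c / T1))"
  proof -
    have "0 < 1 + exp (- c / T1)"
      by (simp add: add_pos_pos)
    then show ?thesis
      by (simp add: field_simps)
  qed
  ultimately have "(\<integral>\<^sup>+x. ennreal (indicator {0..} x * logistic T1 (x - c)) \<partial>lborel)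
      = ennreal (1 / (1 + exp (- c / T1)))"
    by (simp add: indicator_mult_ennreal mult.commute)
  moreover have "0 \<le> indicator {0..} x * logistic T1 (x - c)" for x
    using logistic_nonneg[OF assms] by simp
  ultimately show ?thesis
    by (intro has_bochner_integral_nn_integral) (auto simp: logistic_def add_pos_pos)
qed

lemma has_bochner_integral_silu_component:
  assumes "T1 > 0"
  shows "has_bochner_integral lborel
     (\<lambda>(p1, p2). (p1 * (exp (- ((p1 - b)\<^sup>2)) / sqrt pi)) * (indicator {0..} p2 * logistic T1 (p2 - b / T2)))
     (silu (T1 * T2) b)"
proof -
  have "pair_sigma_finite lborel lborel" ..
  moreover have "silu (T1 * T2) b = b * (1 / (1 + exp (- (b / T2) / T1)))"
    by (simp add: silu_def mult.commute)
  ultimately show ?thesis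
    using pair_sigma_finite.has_bochner_integral_prod_mult[OF _ has_bochner_integral_vacuum_mean
        has_bochner_integral_logistic_tail[OF assms, of "b / T2"]]
    by (simp only: lborel_prod)
qed

text \<open>Only T1 > 0 and the unitarity of U are used: the identity is linear in rho, is phrased
  through the eigendecomposition (U, b) rather than through H, and holds for every T2.\<close>

theorem theorem10:
  fixes T1 T2 :: real and H \<rho> U :: "complex^'n^'n" and b :: "'n \<Rightarrow> real"
  assumes "T1 > 0" and "T2 > 0"
    and "hermitian_mat H" and "unitary_mat U"
    and "H = U ** diag_m (\<lambda>i. complex_of_real (b i)) ** cadj U"
    and "density_op \<rho>"
  shows "integrable lborel
           (\<lambda>(p1, p2). complex_of_real (p1 * indicator {0..} p2) * joint_density T1 T2 U b \<rho> (p1, p2))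
       \<and> (\<integral>pp. (case pp of (p1, p2) \<Rightarrow>
              complex_of_real (p1 * indicator {0..} p2) * joint_density T1 T2 U b \<rho> (p1, p2)) \<partial>lborel)
         = trace (spec_fun (silu (T1 * T2)) U b ** \<rho>)"
proof -
  define g where "g i = (\<lambda>(p1, p2). (p1 * (exp (- ((p1 - b i)\<^sup>2)) / sqrt pi))
                                   * (indicator {0..} p2 * logistic T1 (p2 - b i / T2)))" for i
  have integrand: "(\<lambda>(p1, p2). complex_of_real (p1 * indicator {0..} p2) * joint_density T1 T2 U b \<rho> (p1, p2))
      = (\<lambda>p. \<Sum>i\<in>UNIV. trace (eproj U i ** \<rho>) * of_real (g i p))"
    by (auto simp: fun_eq_iff joint_density_eq_mixture[OF assms(1,4)] g_def sum_distrib_left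
        intro!: sum.cong)
  have "has_bochner_integral lborel (\<lambda>p. \<Sum>i\<in>UNIV. trace (eproj U i ** \<rho>) * of_real (g i p))
      (\<Sum>i\<in>UNIV. trace (eproj U i ** \<rho>) * of_real (silu (T1 * T2) (b i)))"
    unfolding g_def
    by (intro has_bochner_integral_sum has_bochner_integral_mult_right has_bochner_integral_of_real
        has_bochner_integral_silu_component[OF assms(1)])
  moreover have "(\<Sum>i\<in>UNIV. trace (eproj U i ** \<rho>) * of_real (silu (T1 * T2) (b i)))
      = trace (spec_fun (silu (T1 * T2)) U b ** \<rho>)"
    by (simp add: spec_fun_eq_sum_eproj matrix_mul_sum_left trace_sum matrix_mul_scaleR_left
        trace_scaleR mult.commute)
  ultimately show ?thesis
    unfolding integrand has_bochner_integral_iff by simp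
qed

end
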